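(* Let $\phi$ be a proper partial coloring of $G$, let $xy$ be an uncolored edge, and let $\beta\in M(\phi,y)\cup\{\mathsf{blank}\}$. Consider running the Random Fan procedure with parameter $k_{\max}$ on input $(\phi,xy,x,\beta)$, and let $T$ be the number of attempts that fail (i.e., reach $k=k_{\max}$ without returning) before the first successful attempt. If $k_{\max}\ge\frac{8(1+\epsilon)}{\epsilon(2-\epsilon)}$, then for every $t\ge 0$, \[\mathbb{P}[T\ge t]\le\exp\left(-\epsilon^2\,t\,k_{\max}/100\right).\]
   Context: $G$ is a finite simple graph of maximum degree $\Delta$, $\epsilon\in(0,1)$ with $\Delta\ge1/\epsilon$, and $q=(1+\epsilon)\Delta$ is assumed to be an integer; $[q]=\{1,\ldots,q\}$. A partial coloring is a map $\phi\colon E(G)\to[q]\cup\{\mathsf{blank}\}$ ($\mathsf{blank}$ = uncolored), proper if distinct colored edges sharing a vertex get distinct colors. $M(\phi,v)=[q]\setminus\{\phi(vw):vw\in E(G)\}$ is the set of colors missing at $v$. For a vertex $v$ and $\theta\in[q]\cup\{\mathsf{blank}\}$, "a random color from $M(\phi,v)\setminus\{\theta\}$" is obtained by repeatedly drawing $\eta\in[q]$ uniformly at random until $\eta\ne\theta$ and $\eta\in M(\phi,v)$ (so it is uniform on $M(\phi,v)\setminus\{\theta\}$). The Random Fan procedure with parameter $k_{\max}\in\mathbb{N}$ on input $(\phi,xy,x,\beta)$ performs independent attempts until one returns. An attempt: set $y_0=y$, $k=0$, $\theta=\beta$. While $k<k_{\max}$: choose a random color $\eta$ from $M(\phi,y_k)\setminus\{\theta\}$;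 set $\theta=\mathsf{blank}$; if $\eta\in M(\phi,x)$, return; else if $\eta=\beta$, return; else if $\eta\in M(\phi,y_{j-1})$ for some $1\le j\le k$, return; otherwise increase $k$ by one and let $y_k$ be the unique neighbor of $x$ with $\phi(xy_k)=\eta$ (appending the edge $xy_k$ to the fan). If the while loop ends because $k=k_{\max}$, the attempt fails and a new attempt is started from scratch. An attempt that returns is called successful. *)

theory Defs
  imports "HOL-Probability.Probability"
begin

definition simple_graph :: "'v set \<Rightarrow> 'v set set \<Rightarrow> bool" where
  "simple_graph V E \<longleftrightarrow> finite V \<and>
     (\<forall>e\<in>E. \<exists>u w. u \<noteq> w \<and> u \<in> V \<and> w \<in> V \<and> e = {u, w})"

definition degree :: "'v set set \<Rightarrow> 'v \<Rightarrow> nat" where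
  "degree E v = card {w. {v, w} \<in> E}"

definition max_degree :: "'v set \<Rightarrow> 'v set set \<Rightarrow> nat" where
  "max_degree V E = Max (degree E ` V)"

text \<open>Partial colorings: None = blank.\<close>
definition partial_coloring :: "'v set set \<Rightarrow> nat \<Rightarrow> ('v set \<Rightarrow> nat option) \<Rightarrow> bool" where
  "partial_coloring E q \<phi> \<longleftrightarrow> (\<forall>e\<in>E. \<phi> e = None \<or> (\<exists>c\<in>{1..q}. \<phi> e = Some c))"

definition proper_coloring :: "'v set set \<Rightarrow> nat \<Rightarrow> ('v set \<Rightarrow> nat option) \<Rightarrow> bool" where
  "proper_coloring E q \<phi> \<longleftrightarrow> partial_coloring E q \<phi> \<and>
     (\<forall>e\<in>E. \<forall>e'\<in>E. e \<noteq> e' \<and> e \<inter> e' \<noteq> {} \<and> \<phi> e \<noteq> None \<longrightarrow> \<phi> e \<noteq> \<phi> e')"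

definition missing :: "'v set set \<Rightarrow> nat \<Rightarrow> ('v set \<Rightarrow> nat option) \<Rightarrow> 'v \<Rightarrow> nat set" where
  "missing E q \<phi> v = {1..q} - {c. \<exists>w. {v, w} \<in> E \<and> \<phi> {v, w} = Some c}"

text \<open>Remainder of one attempt of Random Fan. Fuel n = k_max - k; ys = [y_0,...,y_k];
  th = current theta. Result True = the attempt fails (while loop ends with k = k_max),
  False = the attempt returns (successful).\<close>
fun fan_run :: "nat \<Rightarrow> 'v set set \<Rightarrow> nat \<Rightarrow> ('v set \<Rightarrow> nat option) \<Rightarrow> 'v \<Rightarrow> nat option
    \<Rightarrow> 'v list \<Rightarrow> nat option \<Rightarrow> bool pmf" where
  "fan_run 0 E q \<phi> x \<beta> ys th = return_pmf True"
| "fan_run (Suc n) E q \<phi> x \<beta> ys th =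
     bind_pmf (pmf_of_set (missing E q \<phi> (last ys) - set_option th)) (\<lambda>\<eta>.
       if \<eta> \<in> missing E q \<phi> x \<or> Some \<eta> = \<beta> \<or>
          (\<exists>j < length ys - 1. \<eta> \<in> missing E q \<phi> (ys ! j))
       then return_pmf False
       else fan_run n E q \<phi> x \<beta> (ys @ [THE w. {x, w} \<in> E \<and> \<phi> {x, w} = Some \<eta>]) None)"

definition fan_attempt :: "nat \<Rightarrow> 'v set set \<Rightarrow> nat \<Rightarrow> ('v set \<Rightarrow> nat option) \<Rightarrow> 'v \<Rightarrow> 'v
    \<Rightarrow> nat option \<Rightarrow> bool pmf" where
  "fan_attempt kmax E q \<phi> x y \<beta> = fan_run kmax E q \<phi> x \<beta> [y] \<beta>"

text \<open>Given an attempt distribution A (True = fail), first_fail n A is True exactly when the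
  first n independent attempts all fail, i.e. the event T >= n where T is the number of failed
  attempts before the first successful one.\<close>
fun first_fail :: "nat \<Rightarrow> bool pmf \<Rightarrow> bool pmf" where
  "first_fail 0 A = return_pmf True"
| "first_fail (Suc n) A = bind_pmf A (\<lambda>f. if f then first_fail n A else return_pmf False)"

end

theory Submission
  imports Defs
begin

(* Proof idea: along a fan whose theta is blank, let R be the number of colours in [q] that are
   neither missing at x nor at an earlier fan vertex y_j with j < k.  Every colour drawn at y_k
   that does not stop the attempt is among these R colours, is drawn with probability at most
   1/D where D = eps Delta <= |M(phi, v)|, and is removed from the count at the next step (it lies
   in M(phi, y_k)).  Hence exp(R/D - (steps left)) bounds the failure probability, by induction
   and u e^(1-u) <= 1.  As R <= Delta initially, one attempt fails with probability at most
   exp(1/eps + 1 - k_max), and failures of independent attempts multiply. *)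

lemma neighbours_subset_vertices:
  assumes "simple_graph V E"
  shows "{w. {v, w} \<in> E} \<subseteq> V"
proof
  fix w assume "w \<in> {w. {v, w} \<in> E}"
  then obtain a b where "a \<in> V" "b \<in> V" "{v, w} = {a, b}"
    using assms unfolding simple_graph_def by force
  then show "w \<in> V" by (metis doubleton_eq_iff)
qed

lemma card_neighbours_le_max_degree:
  assumes "simple_graph V E"
  shows "card {w. {v, w} \<in> E} \<le> max_degree V E"
proof (cases "v \<in> V")
  case True
  with assms show ?thesis
    unfolding max_degree_def degree_def simple_graph_def by simp
next
  case False
  have "v \<in> V" if "{v, w} \<in> E" for w
    using neighbours_subset_vertices[OF assms, of w] that by (auto simp: insert_commute)
  with False have "{w. {v, w} \<in> E} = {}" by blast
  then show ?thesis by simp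
qed

lemma card_present_colours_le_max_degree:
  assumes "simple_graph V E"
  shows "card ({1..q} - missing E q \<phi> v) \<le> max_degree V E"
proof -
  let ?N = "{w. {v, w} \<in> E}"
  have "finite V" using assms by (simp add: simple_graph_def)
  then have "finite ?N" using neighbours_subset_vertices[OF assms] by (rule finite_subset[rotated])
  have "{1..q} - missing E q \<phi> v \<subseteq> (\<lambda>w. the (\<phi> {v, w})) ` ?N"
  proof
    fix c assume "c \<in> {1..q} - missing E q \<phi> v"
    then obtain w where "{v, w} \<in> E" "\<phi> {v, w} = Some c" by (auto simp: missing_def)
    then show "c \<in> (\<lambda>w. the (\<phi> {v, w})) ` ?N" by (intro image_eqI[of _ _ w]) auto
  qed
  then have "card ({1..q} - missing E q \<phi> v) \<le> card ?N"
    using \<open>finite ?N\<close> by (meson card_image_le card_mono finite_imageI order_trans)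
  with card_neighbours_le_max_degree[OF assms, of v] show ?thesis by linarith
qed

lemma card_missing_ge:
  assumes "simple_graph V E"
  shows "real q - real (max_degree V E) \<le> real (card (missing E q \<phi> v))"
proof -
  have sub: "missing E q \<phi> v \<subseteq> {1..q}" unfolding missing_def by auto
  then have "card ({1..q} - missing E q \<phi> v) = q - card (missing E q \<phi> v)"
    by (simp add: card_Diff_subset finite_subset)
  moreover have "card (missing E q \<phi> v) \<le> q" using card_mono[OF _ sub] by simp
  ultimately show ?thesis
    using card_present_colours_le_max_degree[OF assms, of q \<phi> v] by linarith
qed

lemma mult_exp_one_minus_le_one: "(u::real) * exp (1 - u) \<le> 1"
proof -
  have "u * exp (1 - u) \<le> exp (u - 1) * exp (1 - u)"
    using exp_ge_add_one_self[of "u - 1"] by (intro mult_right_mono) auto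
  also have "\<dots> = 1" by (simp add: exp_add[symmetric])
  finally show ?thesis .
qed

lemma potential_step_le:
  fixes D R c n :: real
  assumes "D > 0"
  shows "c / D * exp ((R - c) / D - n) \<le> exp (R / D - (n + 1))"
proof -
  have "c / D * exp ((R - c) / D - n) = c / D * exp (1 - c / D) * exp (R / D - (n + 1))"
    by (simp add: exp_add[symmetric] diff_divide_distrib)
  also have "\<dots> \<le> 1 * exp (R / D - (n + 1))"
    using mult_exp_one_minus_le_one[of "c / D"] by (intro mult_right_mono) auto
  finally show ?thesis by simp
qed

lemma pmf_bind_le_const:
  assumes "\<And>a. a \<in> set_pmf p \<Longrightarrow> pmf (f a) b \<le> B"
  shows "pmf (bind_pmf p f) b \<le> B"
  unfolding pmf_bind
  by (rule measure_pmf.integral_le_const)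
     (auto simp: AE_measure_pmf_iff assms pmf_le_1
       intro!: measure_pmf.integrable_const_bound[where B=1])

lemma pmf_bind_pmf_of_set_le:
  assumes "finite S" "S \<noteq> {}" "C \<subseteq> S"
    and "\<And>a. a \<in> C \<Longrightarrow> pmf (f a) b \<le> B"
    and "\<And>a. a \<in> S - C \<Longrightarrow> pmf (f a) b = 0"
  shows "pmf (bind_pmf (pmf_of_set S) f) b \<le> real (card C) * B / real (card S)"
proof -
  have "pmf (bind_pmf (pmf_of_set S) f) b = (\<Sum>a\<in>S. pmf (f a) b) / real (card S)"
    using assms(2,1) by (rule pmf_bind_pmf_of_set)
  also have "(\<Sum>a\<in>S. pmf (f a) b) = (\<Sum>a\<in>C. pmf (f a) b)"
    using assms(1,3,5) by (intro sum.mono_neutral_right) auto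
  also have "\<dots> \<le> real (card C) * B"
    using sum_mono[of C "\<lambda>a. pmf (f a) b" "\<lambda>_. B"] assms(4) by simp
  finally show ?thesis by (simp add: divide_right_mono)
qed

lemma pmf_first_fail: "pmf (first_fail n A) True = pmf A True ^ n"
proof (induction n)
  case (Suc n)
  have "pmf (first_fail (Suc n) A) True
      = (\<Sum>f\<in>UNIV. pmf (if f then first_fail n A else return_pmf False) True * pmf A f)"
    unfolding first_fail.simps pmf_bind by (rule integral_measure_pmf_real) auto
  with Suc show ?case by (simp add: UNIV_bool)
qed simp

lemma prob_first_fail_le:
  assumes "pmf A True \<le> exp (- L)" "L \<ge> 0" "t \<ge> 0"
  shows "measure_pmf.prob (first_fail (nat \<lceil>t\<rceil>) A) {True} \<le> exp (- (L * t))"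
proof -
  have "measure_pmf.prob (first_fail (nat \<lceil>t\<rceil>) A) {True} = pmf A True ^ nat \<lceil>t\<rceil>"
    by (simp add: measure_pmf_single pmf_first_fail)
  also have "\<dots> \<le> exp (- L) ^ nat \<lceil>t\<rceil>" using assms(1) by (intro power_mono) auto
  also have "\<dots> = exp (- (L * real (nat \<lceil>t\<rceil>)))"
    by (simp add: exp_of_nat_mult[symmetric] mult.commute)
  also have "\<dots> \<le> exp (- (L * t))"
    using assms(2,3) by (simp add: mult_left_mono)
  finally show ?thesis .
qed

definition fan_closing_colours ::
    "'v set set \<Rightarrow> nat \<Rightarrow> ('v set \<Rightarrow> nat option) \<Rightarrow> 'v \<Rightarrow> 'v list \<Rightarrow> nat set" where
  "fan_closing_colours E q \<phi> x ys =
     missing E q \<phi> x \<union> (\<Union>j<length ys - 1. missing E q \<phi> (ys ! j))"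

lemma fan_closing_colours_snoc:
  assumes "ys \<noteq> []"
  shows "fan_closing_colours E q \<phi> x (ys @ [w])
       = fan_closing_colours E q \<phi> x ys \<union> missing E q \<phi> (last ys)"
proof -
  have "(\<Union>j<length (ys @ [w]) - 1. missing E q \<phi> ((ys @ [w]) ! j))
      = (\<Union>j<length ys. missing E q \<phi> (ys ! j))"
    by (auto simp: nth_append)
  also have "{..<length ys} = insert (length ys - 1) {..<length ys - 1}"
    using assms by (cases ys) auto
  finally show ?thesis
    using assms unfolding fan_closing_colours_def by (auto simp: last_conv_nth)
qed

lemma fan_run_Suc:
  "fan_run (Suc n) E q \<phi> x \<beta> ys th =
     bind_pmf (pmf_of_set (missing E q \<phi> (last ys) - set_option th)) (\<lambda>\<eta>.
       if \<eta> \<in> fan_closing_colours E q \<phi> x ys \<or> Some \<eta> = \<beta> then return_pmf False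
       else fan_run n E q \<phi> x \<beta> (ys @ [THE w. {x, w} \<in> E \<and> \<phi> {x, w} = Some \<eta>]) None)"
  unfolding fan_run.simps fan_closing_colours_def by (intro bind_pmf_cong refl if_cong) auto

lemma fan_run_fail_le:
  assumes "D > 0" and card_missing: "\<And>v. D \<le> real (card (missing E q \<phi> v))"
    and "ys \<noteq> []"
  shows "pmf (fan_run n E q \<phi> x \<beta> ys None) True
           \<le> exp (real (card ({1..q} - fan_closing_colours E q \<phi> x ys)) / D - real n)"
  using assms(3)
proof (induction n arbitrary: ys)
  case 0
  then show ?case using \<open>D > 0\<close> by simp
next
  case (Suc n)
  define S where "S = missing E q \<phi> (last ys)"
  define U where "U = {1..q} - fan_closing_colours E q \<phi> x ys"
  define C where "C = {\<eta> \<in> S. \<eta> \<notin> fan_closing_colours E q \<phi> x ys \<and> Some \<eta> \<noteq> \<beta>}"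
  define B where "B = exp ((real (card U) - real (card C)) / D - real n)"
  have "S \<subseteq> {1..q}" unfolding S_def missing_def by auto
  then have "finite S" "C \<subseteq> U" unfolding C_def U_def by (auto intro: finite_subset)
  have "card S \<ge> D" unfolding S_def using card_missing .
  with \<open>D > 0\<close> have "S \<noteq> {}" by auto
  have continue_le: "pmf (fan_run n E q \<phi> x \<beta> (ys @ [w]) None) True \<le> B" for w
  proof -
    have "{1..q} - fan_closing_colours E q \<phi> x (ys @ [w]) \<subseteq> U - C"
      using Suc.prems unfolding U_def C_def S_def by (auto simp: fan_closing_colours_snoc)
    then have "card ({1..q} - fan_closing_colours E q \<phi> x (ys @ [w])) \<le> card (U - C)"
      by (intro card_mono) (auto simp: U_def)
    also have "\<dots> = card U - card C"
      using \<open>C \<subseteq> U\<close> by (simp add: U_def card_Diff_subset finite_subset)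
    finally have "card ({1..q} - fan_closing_colours E q \<phi> x (ys @ [w])) \<le> card U - card C" .
    moreover have "card C \<le> card U" using \<open>C \<subseteq> U\<close> by (simp add: U_def card_mono)
    ultimately have "exp (real (card ({1..q} - fan_closing_colours E q \<phi> x (ys @ [w]))) / D - real n)
        \<le> B"
      unfolding B_def using \<open>D > 0\<close> by (simp add: divide_right_mono)
    with Suc.IH[of "ys @ [w]"] show ?thesis by simp
  qed
  have "pmf (fan_run (Suc n) E q \<phi> x \<beta> ys None) True \<le> real (card C) * B / real (card S)"
    unfolding fan_run_Suc option.set Diff_empty S_def[symmetric]
    using \<open>finite S\<close> \<open>S \<noteq> {}\<close> continue_le by (intro pmf_bind_pmf_of_set_le) (auto simp: C_def)
  also have "\<dots> \<le> real (card C) / D * B"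
    using \<open>card S \<ge> D\<close> \<open>D > 0\<close> unfolding B_def by (simp add: divide_left_mono)
  also have "\<dots> \<le> exp (real (card U) / D - (real n + 1))"
    unfolding B_def using \<open>D > 0\<close> by (rule potential_step_le)
  finally show ?case by (simp add: U_def add.commute)
qed

lemma fan_attempt_fail_le:
  assumes "simple_graph V E" "D > 0" "D \<le> real q - real (max_degree V E)"
  shows "pmf (fan_attempt kmax E q \<phi> x y \<beta>) True \<le> exp (real (max_degree V E) / D + 1 - real kmax)"
proof (cases kmax)
  case 0
  then show ?thesis using \<open>D > 0\<close> by (simp add: fan_attempt_def)
next
  case (Suc n)
  have "pmf (fan_run n E q \<phi> x \<beta> [y, w] None) True \<le> exp (real (max_degree V E) / D - real n)"
    for w
  proof -
    have "card ({1..q} - fan_closing_colours E q \<phi> x [y, w]) \<le> card ({1..q} - missing E q \<phi> x)"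
      by (intro card_mono) (auto simp: fan_closing_colours_def)
    also have "\<dots> \<le> max_degree V E" using assms(1) by (rule card_present_colours_le_max_degree)
    finally have closing_le: "real (card ({1..q} - fan_closing_colours E q \<phi> x [y, w])) / D
        \<le> real (max_degree V E) / D"
      using \<open>D > 0\<close> by (simp add: divide_right_mono)
    have "D \<le> real (card (missing E q \<phi> v))" for v
      using assms(3) card_missing_ge[OF assms(1)] by (rule order_trans)
    with \<open>D > 0\<close> have "pmf (fan_run n E q \<phi> x \<beta> [y, w] None) True
        \<le> exp (real (card ({1..q} - fan_closing_colours E q \<phi> x [y, w])) / D - real n)"
      by (intro fan_run_fail_le) auto
    also have "\<dots> \<le> exp (real (max_degree V E) / D - real n)"
      using closing_le by simp
    finally show ?thesis .
  qed
  then show ?thesis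
    unfolding fan_attempt_def Suc fan_run_Suc
    by (intro pmf_bind_le_const) auto
qed

lemma kmax_margin:
  fixes \<epsilon> k :: real
  assumes "0 < \<epsilon>" "\<epsilon> < 1" "k \<ge> 8 * (1 + \<epsilon>) / (\<epsilon> * (2 - \<epsilon>))"
  shows "\<epsilon>^2 * k / 100 \<le> k - 1 - 1 / \<epsilon>"
proof -
  have "4 / \<epsilon> \<le> 8 * (1 + \<epsilon>) / (\<epsilon> * (2 - \<epsilon>))"
    using assms(1,2) by (simp add: field_simps)
  with assms(3) have "4 / \<epsilon> \<le> k" by linarith
  moreover have "4 < 4 / \<epsilon>" using assms(1,2) by (simp add: field_simps)
  moreover have "\<epsilon>^2 * k \<le> 1 * k"
    using calculation assms(1,2) by (intro mult_right_mono) (auto simp: power_le_one)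
  moreover have "1 / \<epsilon> = (4 / \<epsilon>) / 4" by simp
  ultimately show ?thesis by linarith
qed

theorem proposition5p1:
  fixes V :: "'v set" and E :: "'v set set" and \<epsilon> :: real and q kmax :: nat
    and \<phi> :: "'v set \<Rightarrow> nat option" and x y :: 'v and \<beta> :: "nat option" and t :: real
  assumes "simple_graph V E"
    and "0 < \<epsilon>" and "\<epsilon> < 1"
    and "real (max_degree V E) \<ge> 1 / \<epsilon>"
    and "real q = (1 + \<epsilon>) * real (max_degree V E)"
    and "proper_coloring E q \<phi>"
    and "{x, y} \<in> E" and "\<phi> {x, y} = None"
    and "\<beta> = None \<or> (\<exists>c \<in> missing E q \<phi> y. \<beta> = Some c)"
    and "real kmax \<ge> 8 * (1 + \<epsilon>) / (\<epsilon> * (2 - \<epsilon>))"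
    and "t \<ge> 0"
  shows "measure_pmf.prob (first_fail (nat \<lceil>t\<rceil>) (fan_attempt kmax E q \<phi> x y \<beta>)) {True}
           \<le> exp (- (\<epsilon>^2 * t * real kmax / 100))"
proof -
  define D where "D = \<epsilon> * real (max_degree V E)"
  have "D \<ge> 1"
    using mult_left_mono[OF assms(4), of \<epsilon>] assms(2) unfolding D_def by simp
  have "D \<le> real q - real (max_degree V E)" unfolding D_def assms(5) by (simp add: algebra_simps)
  have "real (max_degree V E) / D = 1 / \<epsilon>" using \<open>D \<ge> 1\<close> unfolding D_def by auto
  then have attempt_fail:
      "pmf (fan_attempt kmax E q \<phi> x y \<beta>) True \<le> exp (- (real kmax - 1 - 1 / \<epsilon>))"
    using fan_attempt_fail_le[OF assms(1) _ \<open>D \<le> _\<close>] \<open>D \<ge> 1\<close> by (simp add: algebra_simps)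
  have margin: "\<epsilon>^2 * real kmax / 100 \<le> real kmax - 1 - 1 / \<epsilon>"
    using assms(2,3,10) by (rule kmax_margin)
  have "0 \<le> \<epsilon>^2 * real kmax / 100" by simp
  with margin have "0 \<le> real kmax - 1 - 1 / \<epsilon>" by linarith
  from prob_first_fail_le[OF attempt_fail this assms(11)]
  have "measure_pmf.prob (first_fail (nat \<lceil>t\<rceil>) (fan_attempt kmax E q \<phi> x y \<beta>)) {True}
      \<le> exp (- ((real kmax - 1 - 1 / \<epsilon>) * t))" .
  also have "\<dots> \<le> exp (- (\<epsilon>^2 * t * real kmax / 100))"
    using mult_right_mono[OF margin assms(11)] by (simp add: algebra_simps)
  finally show ?thesis .
qed

end
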